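(* Let $\mathcal{H}$ be a complex separable Hilbert space with orthonormal basis $\{e_n\}_{n=1}^\infty$, and let $W \in \mathcal{B}(\mathcal{H})$ be the unilateral forward weighted shift $W e_n = w_n e_{n+1}$ with bounded weight sequence $(w_n)_n$ satisfying $\inf_n |w_n| > 0$. Then $W$ does not lie in the norm closure of $\mathfrak{c}(\mathrm{nil}_2) := \{MN - NM : M, N \in \mathcal{B}(\mathcal{H}),\ M^2 = 0 = N^2\}$. *)

theory Defs
  imports "HOL-Analysis.Analysis"
begin

text \<open>Concrete model of the complex separable (infinite-dimensional) Hilbert space:
  H = l^2(nat, complex), with orthonormal basis e_n = indicator of n (0-indexed).\<close>

type_synonym vec = "nat \<Rightarrow> complex"

definition l2 :: "vec set" where
  "l2 = {x. summable (\<lambda>n. (cmod (x n))\<^sup>2)}"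

definition l2norm :: "vec \<Rightarrow> real" where
  "l2norm x = sqrt (\<Sum>n. (cmod (x n))\<^sup>2)"

text \<open>Bounded (complex-linear) operators on l2; only their action on l2 matters.\<close>
definition bounded_op :: "(vec \<Rightarrow> vec) \<Rightarrow> bool" where
  "bounded_op T \<longleftrightarrow>
     (\<forall>x\<in>l2. T x \<in> l2) \<and>
     (\<forall>x\<in>l2. \<forall>y\<in>l2. T (\<lambda>n. x n + y n) = (\<lambda>n. T x n + T y n)) \<and>
     (\<forall>x\<in>l2. \<forall>c::complex. T (\<lambda>n. c * x n) = (\<lambda>n. c * T x n)) \<and>
     (\<exists>C. \<forall>x\<in>l2. l2norm (T x) \<le> C * l2norm x)"

definition opnorm :: "(vec \<Rightarrow> vec) \<Rightarrow> real" where
  "opnorm T = Sup {l2norm (T x) | x. x \<in> l2 \<and> l2norm x \<le> 1}"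

text \<open>Unilateral forward weighted shift W e_n = w_n e_(n+1).\<close>
definition wshift :: "(nat \<Rightarrow> complex) \<Rightarrow> vec \<Rightarrow> vec" where
  "wshift w x = (\<lambda>n. if n = 0 then 0 else w (n - 1) * x (n - 1))"

definition commutator :: "(vec \<Rightarrow> vec) \<Rightarrow> (vec \<Rightarrow> vec) \<Rightarrow> vec \<Rightarrow> vec" where
  "commutator M N x = (\<lambda>n. M (N x) n - N (M x) n)"

definition square_zero :: "(vec \<Rightarrow> vec) \<Rightarrow> bool" where
  "square_zero M \<longleftrightarrow> (\<forall>x\<in>l2. M (M x) = (\<lambda>n. 0))"

definition in_closure_c_nil2 :: "(vec \<Rightarrow> vec) \<Rightarrow> bool" where
  "in_closure_c_nil2 T \<longleftrightarrow>
     (\<forall>\<epsilon>>0. \<exists>M N. bounded_op M \<and> bounded_op N \<and> square_zero M \<and> square_zero N \<and>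
        opnorm (\<lambda>x n. T x n - commutator M N x n) < \<epsilon>)"

end

theory Submission
  imports Defs
begin

(* Let delta = inf |w n| and suppose W is within epsilon < delta/2 of T = MN - NM with M^2 = 0 = N^2.
   Since W is bounded below by delta and has the left inverse z \<mapsto> (z (n+1) / w n), a
   Neumann series shows that T is injective and that its range is complemented by the line
   through e_0, which T itself misses.  Both M and N anticommute with T, and a square-zero
   operator anticommuting with such a T maps everything into the range of T.  Writing
   M e_0 = T b and N e_0 = T a then gives T e_0 = T (N b - M a), so e_0 = N b - M a lies in
   the range of T: a contradiction. *)

section \<open>Square-summable sequences\<close>

lemma l2norm_nonneg: "x \<in> l2 \<Longrightarrow> 0 \<le> l2norm x"
  unfolding l2norm_def l2_def by (simp add: suminf_nonneg)

lemma l2norm_power2: "x \<in> l2 \<Longrightarrow> (l2norm x)\<^sup>2 = (\<Sum>n. (cmod (x n))\<^sup>2)"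
  unfolding l2norm_def l2_def by (simp add: suminf_nonneg)

lemma partial_sum_le_l2norm_power2: "x \<in> l2 \<Longrightarrow> (\<Sum>n<N. (cmod (x n))\<^sup>2) \<le> (l2norm x)\<^sup>2"
  unfolding l2norm_power2 by (auto simp: l2_def intro!: sum_le_suminf)

lemma L2_set_le_l2norm: "x \<in> l2 \<Longrightarrow> L2_set (\<lambda>n. cmod (x n)) {..<N} \<le> l2norm x"
  unfolding L2_set_def
  by (metis l2norm_nonneg partial_sum_le_l2norm_power2 real_sqrt_le_mono real_sqrt_unique)

lemma norm_le_l2norm: "x \<in> l2 \<Longrightarrow> cmod (x n) \<le> l2norm x"
proof -
  assume x: "x \<in> l2"
  have "(cmod (x n))\<^sup>2 \<le> (\<Sum>m<Suc n. (cmod (x m))\<^sup>2)"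
    by (rule member_le_sum) auto
  also have "\<dots> \<le> (l2norm x)\<^sup>2" by (rule partial_sum_le_l2norm_power2[OF x])
  finally show ?thesis by (rule power2_le_imp_le[OF _ l2norm_nonneg[OF x]])
qed

lemma l2I_partial_sums:
  assumes "0 \<le> B" "\<And>N. (\<Sum>n<N. (cmod (x n))\<^sup>2) \<le> B\<^sup>2"
  shows "x \<in> l2 \<and> l2norm x \<le> B"
proof -
  have summable: "summable (\<lambda>n. (cmod (x n))\<^sup>2)"
  proof (rule bounded_imp_summable)
    show "(\<Sum>k\<le>n. (cmod (x k))\<^sup>2) \<le> B\<^sup>2" for n
      unfolding lessThan_Suc_atMost[symmetric] by (rule assms(2))
  qed simp
  have "(\<Sum>n. (cmod (x n))\<^sup>2) \<le> B\<^sup>2" by (rule suminf_le_const[OF summable assms(2)])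
  then show ?thesis
    using summable assms(1) real_sqrt_le_mono unfolding l2_def l2norm_def by fastforce
qed

lemma l2I_L2_set:
  assumes "0 \<le> B" "\<And>N. L2_set (\<lambda>n. cmod (x n)) {..<N} \<le> B"
  shows "x \<in> l2 \<and> l2norm x \<le> B"
proof (rule l2I_partial_sums[OF assms(1)])
  fix N
  have "sqrt (\<Sum>n<N. (cmod (x n))\<^sup>2) \<le> B" using assms(2)[of N] unfolding L2_set_def .
  then show "(\<Sum>n<N. (cmod (x n))\<^sup>2) \<le> B\<^sup>2"
    by (rule sqrt_le_D)
qed

lemma l2_zero: "(\<lambda>n. 0) \<in> l2"
  unfolding l2_def by simp

lemma l2norm_zero: "l2norm (\<lambda>n. 0) = 0"
  unfolding l2norm_def by simp

lemma l2norm_eq_0_imp: "x \<in> l2 \<Longrightarrow> l2norm x = 0 \<Longrightarrow> x = (\<lambda>n. 0)"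
  using norm_le_l2norm by fastforce

lemma l2_add:
  assumes "x \<in> l2" "y \<in> l2"
  shows "(\<lambda>n. x n + y n) \<in> l2 \<and> l2norm (\<lambda>n. x n + y n) \<le> l2norm x + l2norm y"
proof (rule l2I_L2_set)
  show "0 \<le> l2norm x + l2norm y" using assms l2norm_nonneg by simp
  fix N
  have "L2_set (\<lambda>n. cmod (x n + y n)) {..<N} \<le> L2_set (\<lambda>n. cmod (x n)) {..<N} + L2_set (\<lambda>n. cmod (y n)) {..<N}"
    by (rule order.trans[OF L2_set_mono L2_set_triangle_ineq]) (auto simp: norm_triangle_ineq)
  then show "L2_set (\<lambda>n. cmod (x n + y n)) {..<N} \<le> l2norm x + l2norm y"
    using L2_set_le_l2norm[OF assms(1), of N] L2_set_le_l2norm[OF assms(2), of N] by linarith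
qed

lemma l2_scale:
  assumes "x \<in> l2"
  shows "(\<lambda>n. c * x n) \<in> l2 \<and> l2norm (\<lambda>n. c * x n) = cmod c * l2norm x"
proof -
  have summable: "summable (\<lambda>n. (cmod (x n))\<^sup>2)" using assms unfolding l2_def by simp
  have eq: "(\<lambda>n. (cmod (c * x n))\<^sup>2) = (\<lambda>n. (cmod c)\<^sup>2 * (cmod (x n))\<^sup>2)"
    by (simp add: norm_mult power_mult_distrib)
  have "summable (\<lambda>n. (cmod (c * x n))\<^sup>2)"
    unfolding eq by (rule summable_mult[OF summable])
  moreover have "(\<Sum>n. (cmod (c * x n))\<^sup>2) = (cmod c)\<^sup>2 * (\<Sum>n. (cmod (x n))\<^sup>2)"
    unfolding eq by (rule suminf_mult[OF summable])
  ultimately show ?thesis unfolding l2_def l2norm_def by (simp add: real_sqrt_mult)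
qed

lemma l2_diff:
  assumes "x \<in> l2" "y \<in> l2"
  shows "(\<lambda>n. x n - y n) \<in> l2 \<and> l2norm (\<lambda>n. x n - y n) \<le> l2norm x + l2norm y"
  using l2_add[OF assms(1) conjunct1[OF l2_scale[OF assms(2), of "-1"]]]
    l2_scale[OF assms(2), of "-1"] by simp

lemma l2_pointwise_limit:
  assumes "\<And>j. u j \<in> l2" "\<And>j. l2norm (u j) \<le> B" "\<And>n. (\<lambda>j. u j n) \<longlonglongrightarrow> v n"
  shows "v \<in> l2 \<and> l2norm v \<le> B"
proof (rule l2I_L2_set)
  show "0 \<le> B" using assms(1,2) l2norm_nonneg order.trans by blast
  fix N
  have "(\<lambda>j. L2_set (\<lambda>n. cmod (u j n)) {..<N}) \<longlonglongrightarrow> L2_set (\<lambda>n. cmod (v n)) {..<N}"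
    unfolding L2_set_def by (intro tendsto_intros assms(3))
  then show "L2_set (\<lambda>n. cmod (v n)) {..<N} \<le> B"
    by (rule LIMSEQ_le_const2) (use assms(1,2) L2_set_le_l2norm order.trans in blast)
qed

definition unit_vec :: "nat \<Rightarrow> vec" where
  "unit_vec k = (\<lambda>n. if n = k then 1 else 0)"

lemma unit_vec_l2: "unit_vec k \<in> l2" and l2norm_unit_vec: "l2norm (unit_vec k) = 1"
proof -
  have "(\<lambda>n. (cmod (unit_vec k n))\<^sup>2) = (\<lambda>n. if n = k then 1 else 0)"
    by (simp add: unit_vec_def fun_eq_iff)
  then have "(\<lambda>n. (cmod (unit_vec k n))\<^sup>2) sums 1"
    using sums_single[of k "\<lambda>_. 1 :: real"] by simp
  then show "unit_vec k \<in> l2" "l2norm (unit_vec k) = 1"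
    unfolding l2_def l2norm_def sums_iff by auto
qed

lemma l2_telescoping_geometric_bound:
  assumes u: "\<And>j. u j \<in> l2" and q: "q < 1"
    and d: "\<And>j. l2norm (\<lambda>n. u (Suc j) n - u j n) \<le> C * q ^ j"
  shows "(\<lambda>n. u (m + j) n - u j n) \<in> l2 \<and>
    l2norm (\<lambda>n. u (m + j) n - u j n) \<le> C * q ^ j * (1 - q ^ m) / (1 - q)"
proof (induction m)
  case (Suc m)
  have split: "(\<lambda>n. u (Suc m + j) n - u j n) = (\<lambda>n. (u (Suc (m + j)) n - u (m + j) n) + (u (m + j) n - u j n))"
    by simp
  have "(\<lambda>n. u (Suc m + j) n - u j n) \<in> l2"
    "l2norm (\<lambda>n. u (Suc m + j) n - u j n)
       \<le> l2norm (\<lambda>n. u (Suc (m + j)) n - u (m + j) n) + l2norm (\<lambda>n. u (m + j) n - u j n)"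
    using l2_add[OF conjunct1[OF l2_diff[OF u[of "Suc (m + j)"] u[of "m + j"]]] conjunct1[OF Suc.IH]]
    unfolding split[symmetric] by auto
  moreover have "C * q ^ (m + j) + C * q ^ j * (1 - q ^ m) / (1 - q) = C * q ^ j * (1 - q ^ Suc m) / (1 - q)"
    using q by (simp add: power_add field_simps)
  ultimately show ?case using d[of "m + j"] Suc.IH by linarith
qed (simp add: l2_zero l2norm_zero)

lemma l2_limit_of_geometric_differences:
  assumes u: "\<And>j. u j \<in> l2" and q: "0 \<le> q" "q < 1"
    and d: "\<And>j. l2norm (\<lambda>n. u (Suc j) n - u j n) \<le> C * q ^ j"
  obtains v where "\<And>n. (\<lambda>j. u j n) \<longlonglongrightarrow> v n"
    and "\<And>j. (\<lambda>n. v n - u j n) \<in> l2 \<and> l2norm (\<lambda>n. v n - u j n) \<le> C * q ^ j / (1 - q)"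
proof -
  have step_l2: "(\<lambda>n. u (Suc j) n - u j n) \<in> l2" for j using l2_diff[OF u u] by blast
  have C: "0 \<le> C" using d[of 0] l2norm_nonneg[OF step_l2[of 0]] by simp
  have "summable (\<lambda>j. u (Suc j) n - u j n)" for n
  proof (rule summable_comparison_test)
    show "summable (\<lambda>j. C * q ^ j)" using q by (intro summable_mult summable_geometric) simp
    show "\<exists>N. \<forall>j\<ge>N. norm (u (Suc j) n - u j n) \<le> C * q ^ j"
      using norm_le_l2norm[OF step_l2] d order.trans by blast
  qed
  define v where "v n = u 0 n + (\<Sum>j. u (Suc j) n - u j n)" for n
  have lim: "(\<lambda>j. u j n) \<longlonglongrightarrow> v n" for n
  proof -
    have "(\<lambda>j. u 0 n + (\<Sum>i<j. u (Suc i) n - u i n)) \<longlonglongrightarrow> v n"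
      unfolding v_def using \<open>summable _\<close> by (intro tendsto_add tendsto_const summable_LIMSEQ)
    then show ?thesis using sum_lessThan_telescope[of "\<lambda>i. u i n"] by simp
  qed
  have tail: "(\<lambda>n. u (m + j) n - u j n) \<in> l2 \<and>
      l2norm (\<lambda>n. u (m + j) n - u j n) \<le> C * q ^ j * (1 - q ^ m) / (1 - q)" for m j
    by (rule l2_telescoping_geometric_bound[OF u q(2) d])
  have bound: "C * q ^ j * (1 - q ^ m) / (1 - q) \<le> C * q ^ j / (1 - q)" for m j
    using q C mult_left_mono[of "1 - q ^ m" 1 "C * q ^ j"] by (intro divide_right_mono) auto
  have "(\<lambda>n. v n - u j n) \<in> l2 \<and> l2norm (\<lambda>n. v n - u j n) \<le> C * q ^ j / (1 - q)" for j
  proof (rule l2_pointwise_limit[where u = "\<lambda>m n. u (m + j) n - u j n"])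
    show "(\<lambda>n. u (m + j) n - u j n) \<in> l2" for m
      using tail by blast
    show "l2norm (\<lambda>n. u (m + j) n - u j n) \<le> C * q ^ j / (1 - q)" for m
      using tail[of m j] bound[of j m] by linarith
    show "(\<lambda>m. u (m + j) n - u j n) \<longlonglongrightarrow> v n - u j n" for n
      by (rule tendsto_diff[OF LIMSEQ_ignore_initial_segment[OF lim] tendsto_const])
  qed
  with lim that show ?thesis by blast
qed

section \<open>Bounded operators and the Neumann series\<close>

lemma bounded_op_l2: "bounded_op T \<Longrightarrow> x \<in> l2 \<Longrightarrow> T x \<in> l2"
  unfolding bounded_op_def by blast

lemma bounded_op_add:
  "bounded_op T \<Longrightarrow> x \<in> l2 \<Longrightarrow> y \<in> l2 \<Longrightarrow> T (\<lambda>n. x n + y n) = (\<lambda>n. T x n + T y n)"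
  unfolding bounded_op_def by blast

lemma bounded_op_scale: "bounded_op T \<Longrightarrow> x \<in> l2 \<Longrightarrow> T (\<lambda>n. c * x n) = (\<lambda>n. c * T x n)"
  unfolding bounded_op_def by blast

lemma bounded_op_diff:
  assumes "bounded_op T" "x \<in> l2" "y \<in> l2"
  shows "T (\<lambda>n. x n - y n) = (\<lambda>n. T x n - T y n)"
proof -
  have minus: "(\<lambda>n. - y n) \<in> l2" using l2_scale[OF assms(3), of "-1"] by simp
  show ?thesis
    using bounded_op_add[OF assms(1,2) minus] bounded_op_scale[OF assms(1,3), of "-1"] by simp
qed

lemma bounded_op_zero: "bounded_op T \<Longrightarrow> T (\<lambda>n. 0) = (\<lambda>n. 0)"
  using bounded_op_scale[OF _ l2_zero, of T 0] by simp

lemma bounded_op_bound: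
  assumes "bounded_op T"
  obtains C where "0 \<le> C" "\<And>x. x \<in> l2 \<Longrightarrow> l2norm (T x) \<le> C * l2norm x"
proof -
  obtain C where C: "\<And>x. x \<in> l2 \<Longrightarrow> l2norm (T x) \<le> C * l2norm x"
    using assms unfolding bounded_op_def by blast
  have "l2norm (T x) \<le> max C 0 * l2norm x" if "x \<in> l2" for x
    by (rule order.trans[OF C[OF that] mult_right_mono[OF max.cobounded1 l2norm_nonneg[OF that]]])
  then show ?thesis using that[of "max C 0"] by simp
qed

lemma bounded_op_compose:
  assumes A: "bounded_op A" and B: "bounded_op B"
  shows "bounded_op (\<lambda>x. A (B x))"
proof -
  obtain CA where CA: "0 \<le> CA" "\<And>x. x \<in> l2 \<Longrightarrow> l2norm (A x) \<le> CA * l2norm x"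
    using bounded_op_bound[OF A] by blast
  obtain CB where CB: "\<And>x. x \<in> l2 \<Longrightarrow> l2norm (B x) \<le> CB * l2norm x"
    using bounded_op_bound[OF B] by blast
  have "l2norm (A (B x)) \<le> (CA * CB) * l2norm x" if x: "x \<in> l2" for x
    using CA(2)[OF bounded_op_l2[OF B x]] mult_left_mono[OF CB[OF x] CA(1)] by simp
  then show ?thesis
    using A B unfolding bounded_op_def by (auto simp: bounded_op_l2 bounded_op_add bounded_op_scale)
qed

lemma bounded_op_subtract:
  assumes A: "bounded_op A" and B: "bounded_op B"
  shows "bounded_op (\<lambda>x n. A x n - B x n)"
proof -
  obtain CA where CA: "\<And>x. x \<in> l2 \<Longrightarrow> l2norm (A x) \<le> CA * l2norm x"
    using bounded_op_bound[OF A] by blast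
  obtain CB where CB: "\<And>x. x \<in> l2 \<Longrightarrow> l2norm (B x) \<le> CB * l2norm x"
    using bounded_op_bound[OF B] by blast
  have "(\<lambda>n. A x n - B x n) \<in> l2 \<and> l2norm (\<lambda>n. A x n - B x n) \<le> (CA + CB) * l2norm x"
    if x: "x \<in> l2" for x
    using l2_diff[OF bounded_op_l2[OF A x] bounded_op_l2[OF B x]] CA[OF x] CB[OF x]
    by (simp add: distrib_right)
  moreover have "(\<lambda>n. A (\<lambda>n. x n + y n) n - B (\<lambda>n. x n + y n) n)
      = (\<lambda>n. (A x n - B x n) + (A y n - B y n))" if "x \<in> l2" "y \<in> l2" for x y
    using that by (simp add: bounded_op_add[OF A] bounded_op_add[OF B] algebra_simps)
  moreover have "(\<lambda>n. A (\<lambda>n. c * x n) n - B (\<lambda>n. c * x n) n) = (\<lambda>n. c * (A x n - B x n))"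
    if "x \<in> l2" for x c
    using that by (simp add: bounded_op_scale[OF A] bounded_op_scale[OF B] right_diff_distrib)
  ultimately show ?thesis unfolding bounded_op_def by blast
qed

lemma bounded_op_commutator:
  "bounded_op M \<Longrightarrow> bounded_op N \<Longrightarrow> bounded_op (commutator M N)"
  using bounded_op_subtract[OF bounded_op_compose bounded_op_compose, of M N N M]
  unfolding commutator_def[abs_def] by blast

lemma l2norm_le_opnorm:
  assumes T: "bounded_op T" and x: "x \<in> l2"
  shows "l2norm (T x) \<le> opnorm T * l2norm x"
proof -
  obtain C where C: "0 \<le> C" "\<And>x. x \<in> l2 \<Longrightarrow> l2norm (T x) \<le> C * l2norm x"
    using bounded_op_bound[OF T] by blast
  have bdd: "bdd_above {l2norm (T x) | x. x \<in> l2 \<and> l2norm x \<le> 1}"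
    using C order.trans mult_left_le by (fastforce intro!: bdd_aboveI[where M = C])
  have unit: "l2norm (T x) \<le> opnorm T" if "x \<in> l2" "l2norm x \<le> 1" for x
    unfolding opnorm_def by (rule cSup_upper[OF _ bdd]) (use that in blast)
  show ?thesis
  proof (cases "l2norm x = 0")
    case True
    then show ?thesis using l2norm_eq_0_imp[OF x] bounded_op_zero[OF T] l2norm_zero by simp
  next
    case False
    define r where "r = l2norm x"
    define c where "c = complex_of_real (1 / r)"
    have r: "0 < r" using False l2norm_nonneg[OF x] r_def by simp
    then have c: "cmod c = 1 / r" unfolding c_def by (simp add: norm_divide)
    have "l2norm (T (\<lambda>n. c * x n)) \<le> opnorm T"
      using unit l2_scale[OF x, of c] r unfolding c r_def by simp
    then have "l2norm (T x) / r \<le> opnorm T"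
      using l2_scale[OF bounded_op_l2[OF T x], of c] unfolding bounded_op_scale[OF T x] c by simp
    then show ?thesis using r unfolding r_def by (simp add: field_simps)
  qed
qed

lemma opnorm_nonneg:
  assumes T: "bounded_op T"
  shows "0 \<le> opnorm T"
proof -
  have "0 \<le> l2norm (T (unit_vec 0))" by (rule l2norm_nonneg[OF bounded_op_l2[OF T unit_vec_l2]])
  also have "\<dots> \<le> opnorm T" using l2norm_le_opnorm[OF T unit_vec_l2] by (simp add: l2norm_unit_vec)
  finally show ?thesis .
qed

lemma bounded_op_tendsto_pointwise:
  assumes K: "bounded_op K" and u: "\<And>j. u j \<in> l2" and v: "v \<in> l2"
    and dist: "\<And>j. l2norm (\<lambda>n. v n - u j n) \<le> b j" and b: "b \<longlonglongrightarrow> 0"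
  shows "(\<lambda>j. K (u j) n) \<longlonglongrightarrow> K v n"
proof -
  obtain C where C: "0 \<le> C" "\<And>x. x \<in> l2 \<Longrightarrow> l2norm (K x) \<le> C * l2norm x"
    using bounded_op_bound[OF K] by blast
  have "\<forall>j. norm (K (u j) n - K v n) \<le> C * b j"
  proof
    fix j
    have vu: "(\<lambda>n. v n - u j n) \<in> l2" using l2_diff[OF v u] by blast
    have "norm (K (u j) n - K v n) = cmod (K (\<lambda>n. v n - u j n) n)"
      using bounded_op_diff[OF K v u] by (simp add: norm_minus_commute)
    also have "\<dots> \<le> C * l2norm (\<lambda>n. v n - u j n)"
      using norm_le_l2norm[OF bounded_op_l2[OF K vu], of n] C(2)[OF vu] by linarith
    also have "\<dots> \<le> C * b j" by (rule mult_left_mono[OF dist C(1)])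
    finally show "norm (K (u j) n - K v n) \<le> C * b j" .
  qed
  then have "(\<lambda>j. K (u j) n - K v n) \<longlonglongrightarrow> 0"
    by (rule Lim_null_comparison[OF always_eventually tendsto_mult_right_zero[OF b]])
  then show ?thesis by (rule LIM_zero_cancel)
qed

primrec neumann_iterate :: "(vec \<Rightarrow> vec) \<Rightarrow> vec \<Rightarrow> nat \<Rightarrow> vec" where
  "neumann_iterate K y 0 = (\<lambda>n. 0)"
| "neumann_iterate K y (Suc j) = (\<lambda>n. y n + K (neumann_iterate K y j) n)"

lemma neumann_series_solution:
  assumes K: "bounded_op K" and q: "0 \<le> q" "q < 1"
    and contraction: "\<And>z. z \<in> l2 \<Longrightarrow> l2norm (K z) \<le> q * l2norm z"
    and y: "y \<in> l2"
  obtains u where "u \<in> l2" "\<And>n. u n - K u n = y n"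
proof -
  let ?u = "neumann_iterate K y"
  have u: "?u j \<in> l2" for j
    by (induction j) (auto simp: l2_zero intro!: conjunct1[OF l2_add] y bounded_op_l2[OF K])
  have step: "(\<lambda>n. ?u (Suc (Suc j)) n - ?u (Suc j) n) = K (\<lambda>n. ?u (Suc j) n - ?u j n)" for j
    by (subst bounded_op_diff[OF K u u]) simp
  have geometric: "l2norm (\<lambda>n. ?u (Suc j) n - ?u j n) \<le> l2norm y * q ^ j" for j
  proof (induction j)
    case (Suc j)
    have "l2norm (\<lambda>n. ?u (Suc (Suc j)) n - ?u (Suc j) n) \<le> q * l2norm (\<lambda>n. ?u (Suc j) n - ?u j n)"
      unfolding step by (rule contraction[OF conjunct1[OF l2_diff[OF u u]]])
    also have "\<dots> \<le> q * (l2norm y * q ^ j)" using Suc.IH q by (simp add: mult_left_mono)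
    finally show ?case by (simp add: algebra_simps)
  qed (simp add: bounded_op_zero[OF K])
  obtain v where lim: "\<And>n. (\<lambda>j. ?u j n) \<longlonglongrightarrow> v n"
    and tail: "\<And>j. (\<lambda>n. v n - ?u j n) \<in> l2 \<and> l2norm (\<lambda>n. v n - ?u j n) \<le> l2norm y * q ^ j / (1 - q)"
    using l2_limit_of_geometric_differences[OF u q geometric] by blast
  have v: "v \<in> l2" using tail[of 0] by simp
  have "(\<lambda>j. K (?u j) n) \<longlonglongrightarrow> K v n" for n
  proof (rule bounded_op_tendsto_pointwise[OF K u v])
    show "l2norm (\<lambda>n. v n - ?u j n) \<le> l2norm y * q ^ j / (1 - q)" for j
      using tail by blast
    show "(\<lambda>j. l2norm y * q ^ j / (1 - q)) \<longlonglongrightarrow> 0"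
      using q by (intro tendsto_divide_zero tendsto_mult_right_zero LIMSEQ_power_zero) simp
  qed
  then have "(\<lambda>j. ?u (Suc j) n) \<longlonglongrightarrow> y n + K v n" for n
    unfolding neumann_iterate.simps by (rule tendsto_add[OF tendsto_const])
  then have "v n = y n + K v n" for n
    using LIMSEQ_unique LIMSEQ_Suc[OF lim] by blast
  with v that show ?thesis by simp
qed

section \<open>Commutators of square-zero operators\<close>

lemma square_zero_anticommutes_commutator_left:
  assumes M: "bounded_op M" and N: "bounded_op N" and sq: "square_zero M" and x: "x \<in> l2"
  shows "M (commutator M N x) = (\<lambda>n. - commutator M N (M x) n)"
proof -
  have Nx: "N x \<in> l2" and Mx: "M x \<in> l2" using bounded_op_l2 M N x by auto
  have "M (commutator M N x) = (\<lambda>n. M (M (N x)) n - M (N (M x)) n)"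
    unfolding commutator_def by (rule bounded_op_diff[OF M bounded_op_l2[OF M Nx] bounded_op_l2[OF N Mx]])
  also have "\<dots> = (\<lambda>n. - commutator M N (M x) n)"
    using sq Nx x bounded_op_zero[OF N] unfolding square_zero_def commutator_def by simp
  finally show ?thesis .
qed

lemma square_zero_anticommutes_commutator_right:
  assumes M: "bounded_op M" and N: "bounded_op N" and sq: "square_zero N" and x: "x \<in> l2"
  shows "N (commutator M N x) = (\<lambda>n. - commutator M N (N x) n)"
proof -
  have Nx: "N x \<in> l2" and Mx: "M x \<in> l2" using bounded_op_l2 M N x by auto
  have "N (commutator M N x) = (\<lambda>n. N (M (N x)) n - N (N (M x)) n)"
    unfolding commutator_def by (rule bounded_op_diff[OF N bounded_op_l2[OF M Nx] bounded_op_l2[OF N Mx]])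
  also have "\<dots> = (\<lambda>n. - commutator M N (N x) n)"
    using sq Mx x bounded_op_zero[OF M] unfolding square_zero_def commutator_def by simp
  finally show ?thesis .
qed

definition codim_one_range :: "(vec \<Rightarrow> vec) \<Rightarrow> vec \<Rightarrow> bool" where
  "codim_one_range T e \<longleftrightarrow>
     (\<forall>y\<in>l2. \<exists>x\<in>l2. \<exists>t. y = (\<lambda>n. T x n + t * e n)) \<and> (\<forall>x\<in>l2. T x \<noteq> e)"

lemma anticommuting_square_zero_maps_into_range:
  assumes T: "bounded_op T" and P: "bounded_op P" and sq: "square_zero P"
    and anti: "\<And>x. x \<in> l2 \<Longrightarrow> P (T x) = (\<lambda>n. - T (P x) n)"
    and e: "e \<in> l2" and codim: "codim_one_range T e"
    and y: "y \<in> l2"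
  shows "\<exists>z\<in>l2. P y = T z"
proof -
  have decompose: "\<exists>x\<in>l2. \<exists>t. y = (\<lambda>n. T x n + t * e n)" if "y \<in> l2" for y
    using codim that unfolding codim_one_range_def by blast
  \<comment> \<open>From \<open>P e = T r + a e\<close> and \<open>P\<^sup>2 = 0\<close> we get \<open>a\<^sup>2 e \<in> range T\<close>, hence \<open>a = 0\<close>.\<close>
  obtain r a where r: "r \<in> l2" and Pe: "P e = (\<lambda>n. T r n + a * e n)"
    using decompose[OF bounded_op_l2[OF P e]] by blast
  have "(\<lambda>n. 0) = P (P e)" using sq e unfolding square_zero_def by simp
  also have "\<dots> = (\<lambda>n. P (T r) n + P (\<lambda>n. a * e n) n)"
    unfolding Pe by (rule bounded_op_add[OF P bounded_op_l2[OF T r] conjunct1[OF l2_scale[OF e]]])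
  also have "\<dots> = (\<lambda>n. - T (P r) n + a * (T r n + a * e n))"
    using anti[OF r] bounded_op_scale[OF P e, of a] Pe by simp
  finally have aae: "\<And>n. a * a * e n = T (P r) n - a * T r n"
    by (simp add: fun_eq_iff algebra_simps)
  have a: "a = 0"
  proof (rule ccontr)
    assume "a \<noteq> 0"
    have Pr: "P r \<in> l2" and ar: "(\<lambda>n. a * r n) \<in> l2"
      using bounded_op_l2[OF P r] l2_scale[OF r] by auto
    define c where "c = 1 / (a * a)"
    have "T (\<lambda>m. c * (P r m - a * r m)) = (\<lambda>n. c * (T (P r) n - a * T r n))"
      using bounded_op_scale[OF T conjunct1[OF l2_diff[OF Pr ar]], of c] bounded_op_diff[OF T Pr ar]
        bounded_op_scale[OF T r] by simp
    also have "\<dots> = e" using \<open>a \<noteq> 0\<close> by (simp add: c_def fun_eq_iff aae[symmetric])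
    finally show False
      using codim l2_scale l2_diff[OF Pr ar] unfolding codim_one_range_def by blast
  qed
  obtain x t where x: "x \<in> l2" and yx: "y = (\<lambda>n. T x n + t * e n)" using decompose[OF y] by blast
  have Px: "P x \<in> l2" and tr: "(\<lambda>n. t * r n) \<in> l2" using bounded_op_l2[OF P x] l2_scale[OF r] by auto
  have "P y = (\<lambda>n. P (T x) n + P (\<lambda>n. t * e n) n)"
    unfolding yx by (rule bounded_op_add[OF P bounded_op_l2[OF T x] conjunct1[OF l2_scale[OF e]]])
  also have "\<dots> = (\<lambda>n. t * T r n - T (P x) n)"
    using anti[OF x] bounded_op_scale[OF P e, of t] Pe a by simp
  also have "\<dots> = T (\<lambda>n. t * r n - P x n)"
    using bounded_op_diff[OF T tr Px] bounded_op_scale[OF T r, of t] by simp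
  finally show ?thesis using l2_diff[OF tr Px] by blast
qed

lemma square_zero_commutator_not_codim_one:
  assumes M: "bounded_op M" and N: "bounded_op N" and sqM: "square_zero M" and sqN: "square_zero N"
    and e: "e \<in> l2" and codim: "codim_one_range (commutator M N) e"
  shows "\<not> inj_on (commutator M N) l2"
proof
  assume inj: "inj_on (commutator M N) l2"
  let ?T = "commutator M N"
  have T: "bounded_op ?T" by (rule bounded_op_commutator[OF M N])
  have M_range: "\<exists>z\<in>l2. M y = ?T z" if "y \<in> l2" for y
    by (rule anticommuting_square_zero_maps_into_range[OF T M sqM _ e codim that])
      (rule square_zero_anticommutes_commutator_left[OF M N sqM])
  have N_range: "\<exists>z\<in>l2. N y = ?T z" if "y \<in> l2" for y
    by (rule anticommuting_square_zero_maps_into_range[OF T N sqN _ e codim that])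
      (rule square_zero_anticommutes_commutator_right[OF M N sqN])
  obtain a where a: "a \<in> l2" "N e = ?T a" using N_range[OF e] by blast
  obtain b where b: "b \<in> l2" "M e = ?T b" using M_range[OF e] by blast
  have Ma: "M a \<in> l2" and Nb: "N b \<in> l2" using bounded_op_l2 M N a b by auto
  have "?T e = (\<lambda>n. M (N e) n - N (M e) n)" unfolding commutator_def by simp
  also have "\<dots> = (\<lambda>n. ?T (N b) n - ?T (M a) n)"
    using square_zero_anticommutes_commutator_left[OF M N sqM a(1)]
      square_zero_anticommutes_commutator_right[OF M N sqN b(1)] a b by simp
  also have "\<dots> = ?T (\<lambda>n. N b n - M a n)" by (rule bounded_op_diff[OF T Nb Ma, symmetric])
  finally have "e = (\<lambda>n. N b n - M a n)"
    using inj e l2_diff[OF Nb Ma] by (auto dest: inj_onD)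
  moreover obtain p where "p \<in> l2" "M a = ?T p" using M_range[OF a(1)] by blast
  moreover obtain p' where "p' \<in> l2" "N b = ?T p'" using N_range[OF b(1)] by blast
  ultimately have "?T (\<lambda>n. p' n - p n) = e" using bounded_op_diff[OF T] by simp
  then show False using codim l2_diff \<open>p \<in> l2\<close> \<open>p' \<in> l2\<close> unfolding codim_one_range_def by blast
qed

section \<open>Perturbations of the weighted shift\<close>

lemma sum_wshift_power2:
  "(\<Sum>n<Suc N. (cmod (wshift w x n))\<^sup>2) = (\<Sum>n<N. (cmod (w n))\<^sup>2 * (cmod (x n))\<^sup>2)"
  unfolding sum.lessThan_Suc_shift by (simp add: wshift_def norm_mult power_mult_distrib)

lemma bounded_op_wshift:
  assumes B: "\<And>n. cmod (w n) \<le> B"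
  shows "bounded_op (wshift w)"
proof -
  have B0: "0 \<le> B" using B[of 0] norm_ge_zero order.trans by blast
  have "wshift w x \<in> l2 \<and> l2norm (wshift w x) \<le> B * l2norm x" if x: "x \<in> l2" for x
  proof (rule l2I_partial_sums)
    show "0 \<le> B * l2norm x" using B0 l2norm_nonneg[OF x] by simp
    fix N
    have "(\<Sum>n<N. (cmod (wshift w x n))\<^sup>2) \<le> (\<Sum>n<Suc N. (cmod (wshift w x n))\<^sup>2)"
      by (rule sum_mono2) auto
    also have "\<dots> = (\<Sum>n<N. (cmod (w n))\<^sup>2 * (cmod (x n))\<^sup>2)" by (rule sum_wshift_power2)
    also have "\<dots> \<le> (\<Sum>n<N. B\<^sup>2 * (cmod (x n))\<^sup>2)"
      by (intro sum_mono mult_right_mono power_mono B) auto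
    also have "\<dots> \<le> B\<^sup>2 * (l2norm x)\<^sup>2"
      unfolding sum_distrib_left[symmetric] by (intro mult_left_mono partial_sum_le_l2norm_power2 x) simp
    finally show "(\<Sum>n<N. (cmod (wshift w x n))\<^sup>2) \<le> (B * l2norm x)\<^sup>2"
      by (simp add: power_mult_distrib)
  qed
  then show ?thesis unfolding bounded_op_def by (auto simp: wshift_def fun_eq_iff algebra_simps)
qed

lemma l2norm_wshift_ge:
  assumes lower: "\<And>n. \<delta> \<le> cmod (w n)" and \<delta>: "0 < \<delta>" and x: "x \<in> l2" and Wx: "wshift w x \<in> l2"
  shows "\<delta> * l2norm x \<le> l2norm (wshift w x)"
proof -
  have "x \<in> l2 \<and> l2norm x \<le> l2norm (wshift w x) / \<delta>"
  proof (rule l2I_partial_sums)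
    show "0 \<le> l2norm (wshift w x) / \<delta>" using l2norm_nonneg[OF Wx] \<delta> by simp
    fix N
    have "\<delta>\<^sup>2 * (\<Sum>n<N. (cmod (x n))\<^sup>2) = (\<Sum>n<N. \<delta>\<^sup>2 * (cmod (x n))\<^sup>2)"
      by (simp add: sum_distrib_left)
    also have "\<dots> \<le> (\<Sum>n<N. (cmod (w n))\<^sup>2 * (cmod (x n))\<^sup>2)"
      by (intro sum_mono mult_right_mono power_mono lower) (use \<delta> in auto)
    also have "\<dots> \<le> (l2norm (wshift w x))\<^sup>2"
      unfolding sum_wshift_power2[symmetric] by (rule partial_sum_le_l2norm_power2[OF Wx])
    finally show "(\<Sum>n<N. (cmod (x n))\<^sup>2) \<le> (l2norm (wshift w x) / \<delta>)\<^sup>2"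
      using \<delta> by (simp add: field_simps)
  qed
  then show ?thesis using \<delta> by (simp add: field_simps)
qed

definition wshift_linv :: "(nat \<Rightarrow> complex) \<Rightarrow> vec \<Rightarrow> vec" where
  "wshift_linv w z = (\<lambda>n. z (Suc n) / w n)"

lemma wshift_wshift_linv:
  "(\<And>n. w n \<noteq> 0) \<Longrightarrow> wshift w (wshift_linv w z) = (\<lambda>n. if n = 0 then 0 else z n)"
  by (auto simp: wshift_def wshift_linv_def fun_eq_iff)

lemma wshift_linv_l2:
  assumes lower: "\<And>n. \<delta> \<le> cmod (w n)" and \<delta>: "0 < \<delta>" and z: "z \<in> l2"
  shows "wshift_linv w z \<in> l2 \<and> l2norm (wshift_linv w z) \<le> l2norm z / \<delta>"
proof (rule l2I_partial_sums)
  show "0 \<le> l2norm z / \<delta>" using l2norm_nonneg[OF z] \<delta> by simp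
  have w: "0 < cmod (w n)" for n using lower[of n] \<delta> by linarith
  fix N
  have "(\<Sum>n<N. (cmod (wshift_linv w z n))\<^sup>2) = (\<Sum>n<N. (cmod (z (Suc n)))\<^sup>2 / (cmod (w n))\<^sup>2)"
    by (simp add: wshift_linv_def norm_divide power_divide)
  also have "\<dots> \<le> (\<Sum>n<N. (cmod (z (Suc n)))\<^sup>2 / \<delta>\<^sup>2)"
    by (intro sum_mono divide_left_mono power_mono lower mult_pos_pos) (use \<delta> w in auto)
  also have "\<dots> \<le> (\<Sum>n<Suc N. (cmod (z n))\<^sup>2) / \<delta>\<^sup>2"
    unfolding sum.lessThan_Suc_shift sum_divide_distrib[symmetric] by (intro divide_right_mono) auto
  also have "\<dots> \<le> (l2norm z)\<^sup>2 / \<delta>\<^sup>2"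
    by (intro divide_right_mono partial_sum_le_l2norm_power2 z) simp
  finally show "(\<Sum>n<N. (cmod (wshift_linv w z n))\<^sup>2) \<le> (l2norm z / \<delta>)\<^sup>2"
    by (simp add: power_divide)
qed

lemma bounded_op_wshift_linv:
  assumes "\<And>n. \<delta> \<le> cmod (w n)" "0 < \<delta>"
  shows "bounded_op (wshift_linv w)"
  unfolding bounded_op_def
proof (intro conjI)
  show "\<exists>C. \<forall>x\<in>l2. l2norm (wshift_linv w x) \<le> C * l2norm x"
    using wshift_linv_l2[of \<delta> w, OF assms] by (intro exI[of _ "1 / \<delta>"]) auto
qed (use wshift_linv_l2[of \<delta> w, OF assms] in \<open>auto simp: wshift_linv_def fun_eq_iff add_divide_distrib\<close>)

context
  fixes w :: "nat \<Rightarrow> complex" and \<delta> \<epsilon> :: real and T :: "vec \<Rightarrow> vec"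
  assumes lower: "\<And>n. \<delta> \<le> cmod (w n)" and \<delta>: "0 < \<delta>"
    and W: "bounded_op (wshift w)" and T: "bounded_op T"
    and close: "\<And>x. x \<in> l2 \<Longrightarrow> l2norm (\<lambda>n. wshift w x n - T x n) \<le> \<epsilon> * l2norm x"
    and \<epsilon>: "0 \<le> \<epsilon>" "2 * \<epsilon> < \<delta>"
begin

lemma perturbed_wshift_bounded_below:
  assumes x: "x \<in> l2"
  shows "(\<delta> - \<epsilon>) * l2norm x \<le> l2norm (T x)"
proof -
  have "\<delta> * l2norm x \<le> l2norm (wshift w x)"
    by (rule l2norm_wshift_ge[OF lower \<delta> x bounded_op_l2[OF W x]])
  also have "\<dots> \<le> l2norm (T x) + l2norm (\<lambda>n. wshift w x n - T x n)"
    using l2_add[OF bounded_op_l2[OF T x] conjunct1[OF l2_diff[OF bounded_op_l2[OF W x] bounded_op_l2[OF T x]]]]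
    by simp
  finally show ?thesis using close[OF x] by (simp add: left_diff_distrib)
qed

lemma perturbed_wshift_inj: "inj_on T l2"
proof (rule inj_onI)
  fix x y assume x: "x \<in> l2" and y: "y \<in> l2" and eq: "T x = T y"
  have "T (\<lambda>n. x n - y n) = (\<lambda>n. 0)" using bounded_op_diff[OF T x y] eq by simp
  then have "(\<delta> - \<epsilon>) * l2norm (\<lambda>n. x n - y n) \<le> 0"
    using perturbed_wshift_bounded_below[OF conjunct1[OF l2_diff[OF x y]]] by (simp add: l2norm_zero)
  then have "l2norm (\<lambda>n. x n - y n) = 0"
    using \<epsilon> l2norm_nonneg[OF conjunct1[OF l2_diff[OF x y]]] by (simp add: mult_le_0_iff)
  then show "x = y" using l2norm_eq_0_imp[OF conjunct1[OF l2_diff[OF x y]]] by (simp add: fun_eq_iff)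
qed

lemma perturbed_wshift_misses_unit_vec:
  assumes x: "x \<in> l2"
  shows "T x \<noteq> unit_vec 0"
proof
  assume Tx: "T x = unit_vec 0"
  have "1 = cmod (wshift w x 0 - T x 0)" by (simp add: Tx wshift_def unit_vec_def)
  also have "\<dots> \<le> \<epsilon> * l2norm x"
    using norm_le_l2norm[OF conjunct1[OF l2_diff[OF bounded_op_l2[OF W x] bounded_op_l2[OF T x]]]] close[OF x]
    by (rule order.trans)
  finally have "1 \<le> \<epsilon> * l2norm x" .
  moreover have "(\<delta> - \<epsilon>) * l2norm x \<le> 1"
    using perturbed_wshift_bounded_below[OF x] by (simp add: Tx l2norm_unit_vec)
  moreover have x_pos: "0 < l2norm x" using \<open>1 \<le> \<epsilon> * l2norm x\<close> \<epsilon>(1) l2norm_nonneg[OF x]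
    by (metis less_eq_real_def mult_zero_right not_one_le_zero)
  ultimately show False
    using mult_strict_right_mono[OF \<epsilon>(2) x_pos] by (simp add: left_diff_distrib)
qed

lemma perturbed_wshift_decompose:
  assumes y: "y \<in> l2"
  shows "\<exists>x\<in>l2. \<exists>t. y = (\<lambda>n. T x n + t * unit_vec 0 n)"
proof -
  let ?L = "wshift_linv w" and ?D = "\<lambda>x n. wshift w x n - T x n"
  have L: "bounded_op ?L" by (rule bounded_op_wshift_linv[OF lower \<delta>])
  have K: "bounded_op (\<lambda>z. ?D (?L z))" by (rule bounded_op_compose[OF bounded_op_subtract[OF W T] L])
  have "l2norm (?D (?L z)) \<le> (\<epsilon> / \<delta>) * l2norm z" if z: "z \<in> l2" for z
  proof -
    have "l2norm (?D (?L z)) \<le> \<epsilon> * l2norm (?L z)" by (rule close[OF bounded_op_l2[OF L z]])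
    also have "\<dots> \<le> \<epsilon> * (l2norm z / \<delta>)"
      using wshift_linv_l2[OF lower \<delta> z] \<epsilon> by (intro mult_left_mono) auto
    finally show ?thesis by simp
  qed
  \<comment> \<open>\<open>W (L u)\<close> is \<open>u\<close> with its 0-th entry removed, so \<open>u - D (L u) = y\<close> gives \<open>y = T (L u) + u 0 e\<^sub>0\<close>.\<close>
  then obtain u where u: "u \<in> l2" "\<And>n. u n - ?D (?L u) n = y n"
    using neumann_series_solution[OF K _ _ _ y, of "\<epsilon> / \<delta>"] \<epsilon> \<delta> by auto
  have w: "w n \<noteq> 0" for n using lower[of n] \<delta> by auto
  have "y = (\<lambda>n. T (?L u) n + u 0 * unit_vec 0 n)"
  proof
    fix n
    show "y n = T (?L u) n + u 0 * unit_vec 0 n"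
      using u(2)[of n] wshift_wshift_linv[of w u, OF w] by (cases "n = 0") (simp_all add: unit_vec_def add.commute)
  qed
  then show ?thesis using bounded_op_l2[OF L u(1)] by blast
qed

lemma perturbed_wshift_codim_one_range: "codim_one_range T (unit_vec 0)"
  unfolding codim_one_range_def
  using perturbed_wshift_decompose perturbed_wshift_misses_unit_vec by blast

end

theorem proposition4p20:
  fixes w :: "nat \<Rightarrow> complex"
  assumes "bdd_above (range (\<lambda>n. cmod (w n)))"
    and "(INF n. cmod (w n)) > 0"
  shows "\<not> in_closure_c_nil2 (wshift w)"
proof
  assume "in_closure_c_nil2 (wshift w)"
  define \<delta> where "\<delta> = (INF n. cmod (w n))"
  have \<delta>: "0 < \<delta>" using assms(2) unfolding \<delta>_def .
  have lower: "\<delta> \<le> cmod (w n)" for n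
    unfolding \<delta>_def by (rule cINF_lower) (auto intro: bdd_belowI[where m = 0])
  have W: "bounded_op (wshift w)"
    using assms(1) by (auto simp: bdd_above_def intro: bounded_op_wshift)
  obtain M N where M: "bounded_op M" and N: "bounded_op N"
    and sqM: "square_zero M" and sqN: "square_zero N"
    and close: "opnorm (\<lambda>x n. wshift w x n - commutator M N x n) < \<delta> / 2"
    using \<open>in_closure_c_nil2 (wshift w)\<close> \<delta> unfolding in_closure_c_nil2_def by (meson half_gt_zero)
  let ?T = "commutator M N"
  have T: "bounded_op ?T" by (rule bounded_op_commutator[OF M N])
  have D: "bounded_op (\<lambda>x n. wshift w x n - ?T x n)" by (rule bounded_op_subtract[OF W T])
  note perturbed = lower \<delta> W T l2norm_le_opnorm[OF D] opnorm_nonneg[OF D]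
  have "codim_one_range ?T (unit_vec 0)" and "inj_on ?T l2"
    using perturbed_wshift_codim_one_range[OF perturbed] perturbed_wshift_inj[OF perturbed] close by auto
  then show False
    using square_zero_commutator_not_codim_one[OF M N sqM sqN unit_vec_l2] by blast
qed

end
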